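(* Let $H$ be a hypergraph containing some $2$-edges and let $H'$ be its $2$-subdivision. If $H$ is degenerate, then so is $H'$.
   Context: A hypergraph $H=(V,E)$ has finite vertex set $V$ and edge set $E\subseteq 2^V$; $R(H)=\{|F|:F\in E\}$. $H_1\subseteq H_2$ means there is an injective $f\colon V(H_1)\to V(H_2)$ with $f(F)\in E(H_2)$ for all $F\in E(H_1)$. For $G$ on $n$ vertices, $h_n(G)=\sum_{F\in E(G)}1/\binom{n}{|F|}$; $\pi_n(H)=\max\{h_n(G): G\text{ on } n \text{ vertices}, R(G)\subseteq R(H), H\not\subseteq G\}$ and $\pi(H)=\lim_n\pi_n(H)$. $H$ is degenerate if $\pi(H)=|R(H)|-1$. The $2$-subdivision of $H$: if $H$ has $2$-edges $\{u_1,v_1\},\dots,\{u_t,v_t\}$, add $t$ new vertices $x_1,\dots,x_t$ and replace each $\{u_i,v_i\}$ by the two edges $\{u_i,x_i\},\{x_i,v_i\}$, keeping all other edges. *)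

theory Defs
  imports Complex_Main
begin

type_synonym 'a hgraph = "'a set \<times> 'a set set"

definition hypergraph :: "'a hgraph \<Rightarrow> bool" where
  "hypergraph H \<longleftrightarrow> finite (fst H) \<and> (\<forall>F\<in>snd H. F \<subseteq> fst H)"

definition edge_sizes :: "'a hgraph \<Rightarrow> nat set" where
  "edge_sizes H = card ` snd H"

definition subhyp :: "'a hgraph \<Rightarrow> 'b hgraph \<Rightarrow> bool" where
  "subhyp H1 H2 \<longleftrightarrow> (\<exists>f. inj_on f (fst H1) \<and> f ` fst H1 \<subseteq> fst H2 \<and>
                        (\<forall>F\<in>snd H1. f ` F \<in> snd H2))"

definition h_n :: "nat \<Rightarrow> 'b set set \<Rightarrow> real" where
  "h_n n E = (\<Sum>F\<in>E. 1 / real (n choose card F))"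

text \<open>pi_n(H): maximum of h_n(G) over hypergraphs G on n vertices (w.l.o.g. on {0..<n})
  with R(G) \<subseteq> R(H) and H not contained in G.\<close>
definition pi_n :: "'a hgraph \<Rightarrow> nat \<Rightarrow> real" where
  "pi_n H n = Max {h_n n E | E. E \<subseteq> Pow {0..<n} \<and> edge_sizes ({0..<n}, E) \<subseteq> edge_sizes H
                                \<and> \<not> subhyp H ({0..<n}, E)}"

definition degenerate :: "'a hgraph \<Rightarrow> bool" where
  "degenerate H \<longleftrightarrow> ((\<lambda>n. pi_n H n) \<longlonglongrightarrow> real (card (edge_sizes H)) - 1)"

text \<open>2-subdivision: old vertices are Inl v; the new vertex subdividing the 2-edge F is Inr F.\<close>
definition subdiv2 :: "'a hgraph \<Rightarrow> ('a + 'a set) hgraph" where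
  "subdiv2 H = (Inl ` fst H \<union> Inr ` {F \<in> snd H. card F = 2},
                {Inl ` F | F. F \<in> snd H \<and> card F \<noteq> 2} \<union>
                {{Inl u, Inr F} | u F. F \<in> snd H \<and> card F = 2 \<and> u \<in> F})"

end

theory Submission
  imports Defs "HOL-Real_Asymp.Real_Asymp"
begin

text \<open>
  Let G on n vertices avoid the 2-subdivision H' of H, and let c be the number of vertices plus
  the number of 2-edges of H. Replace the 2-edges of G by all pairs of vertices having at least c
  common neighbours in the graph of 2-edges. The new family avoids H: an embedding of H into it
  lifts to an embedding of H' into G, the subdivision vertex of each 2-edge being chosen greedily
  among the common neighbours of its image. Weighting each ordered edge (u, w) between vertices
  of degree at least t by d(w)/d(u), a sum that by AM-GM is at least the number of such edges,
  one counts that this loses at most n t + n/2 + n^2 c / (2 t) of the 2-edges; for t = sqrt n this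
  is o(n^2), so pi_n(H') \<le> pi_n(H) + o(1). Conversely R(H') = R(H), and the family of all sets
  whose size lies in R(H) except the largest shows pi_n(H') \<ge> |R(H)| - 1.
\<close>

lemma card_ordered_pairs_eq_twice_card_doubletons:
  assumes fin: "finite V" and sym: "\<And>u v. P u v \<Longrightarrow> P v u" and irrefl: "\<And>u. \<not> P u u"
  shows "card {(u, v). u \<in> V \<and> v \<in> V \<and> P u v} = 2 * card {{u, v} |u v. u \<in> V \<and> v \<in> V \<and> P u v}"
proof -
  let ?K = "{{u, v} |u v. u \<in> V \<and> v \<in> V \<and> P u v}"
  let ?fibre = "\<lambda>F. {(u, v). u \<in> V \<and> v \<in> V \<and> P u v \<and> {u, v} = F}"
  have pairs_eq: "{(u, v). u \<in> V \<and> v \<in> V \<and> P u v} = (\<Union>F\<in>?K. ?fibre F)" by blast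
  have card_fibre: "card (?fibre F) = 2" if "F \<in> ?K" for F
  proof -
    from that obtain a b where ab: "a \<in> V" "b \<in> V" "P a b" "F = {a, b}" by blast
    have "a \<noteq> b" using ab irrefl by blast
    moreover have "?fibre F = {(a, b), (b, a)}"
      using ab sym irrefl by (auto simp: doubleton_eq_iff)
    ultimately show ?thesis by simp
  qed
  have "finite ?K" by (rule finite_subset[of _ "Pow V"]) (use fin in auto)
  then have "card (\<Union>F\<in>?K. ?fibre F) = (\<Sum>F\<in>?K. card (?fibre F))"
    by (intro card_UN_disjoint) (use fin in \<open>auto intro: finite_subset[of _ "V \<times> V"]\<close>)
  then show ?thesis using card_fibre by (simp add: pairs_eq)
qed

lemma card_le_sum_ratio_if_swap_invariant:
  fixes f :: "'a \<Rightarrow> real"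
  assumes fin: "finite S" and swap: "prod.swap ` S = S" and pos: "\<And>u w. (u, w) \<in> S \<Longrightarrow> f u > 0"
  shows "real (card S) \<le> (\<Sum>(u, w)\<in>S. f w / f u)"
proof -
  have pos': "f w > 0" if "(u, w) \<in> S" for u w
    using pos[of w u] that swap by force
  have reflect: "(\<Sum>(u, w)\<in>S. f u / f w) = (\<Sum>(u, w)\<in>S. f w / f u)"
    using sum.reindex[OF inj_swap, of "\<lambda>(u, w). f w / f u" S] swap by (simp add: case_prod_beta)
  have "2 * real (card S) = (\<Sum>(u, w)\<in>S. 2)" by simp
  also have "\<dots> \<le> (\<Sum>(u, w)\<in>S. f w / f u + f u / f w)"
  proof (intro sum_mono, clarify)
    fix u w assume uw: "(u, w) \<in> S"
    have "f w / f u + f u / f w - 2 = (f w - f u)^2 / (f u * f w)"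
      using pos[OF uw] pos'[OF uw] by (simp add: field_simps power2_eq_square)
    moreover have "(f w - f u)^2 / (f u * f w) \<ge> 0" using pos[OF uw] pos'[OF uw] by simp
    ultimately show "2 \<le> f w / f u + f u / f w" by linarith
  qed
  also have "\<dots> = 2 * (\<Sum>(u, w)\<in>S. f w / f u)"
    using reflect by (simp add: sum.distrib case_prod_beta)
  finally show ?thesis by simp
qed

lemma greedy_distinct_representatives:
  assumes "finite T" and "finite X" and "\<And>x. x \<in> T \<Longrightarrow> finite (C x)"
    and "\<And>x. x \<in> T \<Longrightarrow> card T + card X \<le> card (C x)"
  shows "\<exists>m. inj_on m T \<and> (\<forall>x\<in>T. m x \<in> C x \<and> m x \<notin> X)"
  using assms(1,3,4)
proof (induction T rule: finite_induct)
  case empty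
  then show ?case by simp
next
  case (insert a T)
  then obtain m where m: "inj_on m T" "\<forall>x\<in>T. m x \<in> C x \<and> m x \<notin> X"
    by fastforce
  have "card (X \<union> m ` T) \<le> card X + card T"
    using card_Un_le[of X "m ` T"] card_image_le[OF insert.hyps(1), of m] by linarith
  also have "\<dots> < card (C a)" using insert.prems(2)[of a] insert.hyps by simp
  finally have "\<not> C a \<subseteq> X \<union> m ` T"
    using card_mono[of "X \<union> m ` T" "C a"] assms(2) insert.hyps(1) by auto
  then obtain y where y: "y \<in> C a" "y \<notin> X" "y \<notin> m ` T" by blast
  have "inj_on (m(a := y)) (insert a T)"
    using m(1) y(3) insert.hyps(2) by (auto simp: inj_on_def)
  moreover have "\<forall>x\<in>insert a T. (m(a := y)) x \<in> C x \<and> (m(a := y)) x \<notin> X"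
    using m y insert.hyps(2) by auto
  ultimately show ?case by blast
qed

lemma inj_on_case_sum:
  assumes "inj_on f A" and "inj_on g B" and "\<And>y. y \<in> B \<Longrightarrow> g y \<notin> f ` A"
  shows "inj_on (case_sum f g) (Inl ` A \<union> Inr ` B)"
  using assms unfolding inj_on_def by (auto split: sum.split) (metis imageI)+

locale finite_graph =
  fixes V :: "'v set" and B :: "'v set set"
  assumes finite_vertices: "finite V"
    and edges_subset: "B \<subseteq> Pow V"
    and card_edge: "F \<in> B \<Longrightarrow> card F = 2"
begin

definition nbhd :: "'v \<Rightarrow> 'v set" where
  "nbhd u = {w \<in> V. {u, w} \<in> B}"

definition degree :: "'v \<Rightarrow> nat" where
  "degree u = card (nbhd u)"

definition codegree :: "'v \<Rightarrow> 'v \<Rightarrow> nat" where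
  "codegree u v = card (nbhd u \<inter> nbhd v)"

definition high_codegree_pairs :: "nat \<Rightarrow> 'v set set" where
  "high_codegree_pairs c = {{u, v} |u v. u \<in> V \<and> v \<in> V \<and> u \<noteq> v \<and> c \<le> codegree u v}"

lemma nbhd_subset: "nbhd u \<subseteq> V"
  by (auto simp: nbhd_def)

lemma finite_nbhd: "finite (nbhd u)"
  using finite_subset[OF nbhd_subset finite_vertices] .

lemma not_loop: "{u, u} \<notin> B"
  using card_edge by force

lemma mem_nbhd_commute: "u \<in> V \<Longrightarrow> w \<in> nbhd u \<longleftrightarrow> u \<in> nbhd w"
  using edges_subset by (auto simp: nbhd_def insert_commute)

lemma codegree_le_degree: "codegree u v \<le> degree u"
  unfolding codegree_def degree_def by (intro card_mono finite_nbhd) auto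

lemma card_Sigma_nbhd: "card (Sigma V nbhd) = 2 * card B"
proof -
  have doubletons: "{{u, w} |u w. u \<in> V \<and> w \<in> V \<and> {u, w} \<in> B} = B"
  proof (intro equalityI subsetI)
    fix F assume "F \<in> B"
    moreover obtain u w where "F = {u, w}" using card_edge[OF \<open>F \<in> B\<close>] by (meson card_2_iff)
    ultimately show "F \<in> {{u, w} |u w. u \<in> V \<and> w \<in> V \<and> {u, w} \<in> B}"
      using edges_subset by blast
  qed auto
  have "Sigma V nbhd = {(u, w). u \<in> V \<and> w \<in> V \<and> {u, w} \<in> B}"
    by (auto simp: nbhd_def)
  also have "card \<dots> = 2 * card {{u, w} |u w. u \<in> V \<and> w \<in> V \<and> {u, w} \<in> B}"
    using not_loop
    by (intro card_ordered_pairs_eq_twice_card_doubletons[OF finite_vertices]) (auto simp: insert_commute)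
  finally show ?thesis by (simp only: doubletons)
qed

lemma sum_card_high_codegree_le:
  "(\<Sum>u\<in>V. card {v \<in> V. c \<le> codegree u v}) \<le> 2 * card (high_codegree_pairs c) + card V"
proof -
  let ?Q = "{(u, v). u \<in> V \<and> v \<in> V \<and> u \<noteq> v \<and> c \<le> codegree u v}"
  have "(\<Sum>u\<in>V. card {v \<in> V. c \<le> codegree u v}) = card (Sigma V (\<lambda>u. {v \<in> V. c \<le> codegree u v}))"
    using finite_vertices by simp
  also have "\<dots> \<le> card (?Q \<union> (\<lambda>u. (u, u)) ` V)"
    by (intro card_mono) (use finite_vertices in \<open>auto intro: finite_subset[of _ "V \<times> V"]\<close>)
  also have "\<dots> \<le> card ?Q + card V"
    using card_Un_le card_image_le[OF finite_vertices] by (meson add_left_mono order_trans)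
  also have "card ?Q = 2 * card (high_codegree_pairs c)"
    unfolding high_codegree_pairs_def
    by (rule card_ordered_pairs_eq_twice_card_doubletons[OF finite_vertices])
       (auto simp: codegree_def Int_commute)
  finally show ?thesis .
qed

lemma sum_degree_nbhd:
  assumes "u \<in> V"
  shows "(\<Sum>w\<in>nbhd u. degree w) = (\<Sum>v\<in>V. codegree u v)"
proof -
  have "(\<Sum>w\<in>nbhd u. degree w) = (\<Sum>w\<in>nbhd u. \<Sum>v\<in>V. of_bool (v \<in> nbhd w))"
    using finite_vertices nbhd_subset by (simp add: degree_def Int_absorb1)
  also have "\<dots> = (\<Sum>v\<in>V. \<Sum>w\<in>nbhd u. of_bool (v \<in> nbhd w))"
    by (rule sum.swap)
  also have "\<dots> = (\<Sum>v\<in>V. codegree u v)"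
  proof (rule sum.cong[OF refl])
    fix v assume "v \<in> V"
    then have "nbhd u \<inter> {w. v \<in> nbhd w} = nbhd u \<inter> nbhd v"
      using mem_nbhd_commute nbhd_subset by blast
    then show "(\<Sum>w\<in>nbhd u. of_bool (v \<in> nbhd w)) = codegree u v"
      using finite_nbhd by (simp add: codegree_def)
  qed
  finally show ?thesis .
qed

lemma sum_codegree_le:
  "(\<Sum>v\<in>V. codegree u v) \<le> card {v \<in> V. c \<le> codegree u v} * degree u + card V * c"
proof -
  have "(\<Sum>v\<in>V. codegree u v) \<le> (\<Sum>v\<in>V. (if c \<le> codegree u v then degree u else 0) + c)"
    using codegree_le_degree[of u] by (intro sum_mono) (auto intro: trans_le_add1)
  also have "\<dots> = card {v \<in> V. c \<le> codegree u v} * degree u + card V * c"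
    using finite_vertices by (simp add: sum.distrib sum.If_cases Int_def)
  finally show ?thesis .
qed

lemma card_Sigma_nbhd_le_restrict:
  assumes "L \<subseteq> V"
  shows "card (Sigma V nbhd) \<le> card (SIGMA u:L. nbhd u \<inter> L) + 2 * (\<Sum>u\<in>V - L. degree u)"
proof -
  let ?inner = "SIGMA u:L. nbhd u \<inter> L" and ?out = "Sigma (V - L) nbhd"
  have fin_out: "finite ?out" using finite_vertices finite_nbhd by simp
  have "Sigma V nbhd \<subseteq> ?inner \<union> (?out \<union> prod.swap ` ?out)"
  proof
    fix p assume "p \<in> Sigma V nbhd"
    then obtain u w where p: "p = (u, w)" "u \<in> V" "w \<in> nbhd u" by blast
    then have "w \<in> V" using nbhd_subset by blast
    consider "u \<notin> L" | "u \<in> L" "w \<in> L" | "u \<in> L" "w \<notin> L" by blast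
    then show "p \<in> ?inner \<union> (?out \<union> prod.swap ` ?out)"
    proof cases
      case 3
      then have "(w, u) \<in> ?out" using p \<open>w \<in> V\<close> mem_nbhd_commute by auto
      then show ?thesis using p by (auto intro: image_eqI[where x = "(w, u)"])
    qed (use p in auto)
  qed
  then have "card (Sigma V nbhd) \<le> card (?inner \<union> (?out \<union> prod.swap ` ?out))"
    using finite_subset[OF assms finite_vertices] finite_nbhd fin_out by (intro card_mono) auto
  also have "\<dots> \<le> card ?inner + card (?out \<union> prod.swap ` ?out)"
    by (rule card_Un_le)
  also have "card (?out \<union> prod.swap ` ?out) \<le> 2 * card ?out"
    using card_Un_le[of ?out "prod.swap ` ?out"] by (simp add: card_image)
  also have "card ?out = (\<Sum>u\<in>V - L. degree u)"
    using finite_vertices finite_nbhd by (simp add: degree_def)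
  finally show ?thesis by simp
qed

lemma card_Sigma_high_degree_le:
  fixes t :: real
  assumes "t > 0"
  defines "L \<equiv> {u \<in> V. t \<le> degree u}"
  shows "real (card (SIGMA u:L. nbhd u \<inter> L))
    \<le> 2 * card (high_codegree_pairs c) + card V + real (card V) ^ 2 * c / t"
proof -
  let ?hi = "\<lambda>u. card {v \<in> V. c \<le> codegree u v}"
  have finite_L: "finite L" using finite_vertices by (simp add: L_def)
  have degree_pos: "real (degree u) > 0" if "u \<in> L" for u
    using that assms(1) by (auto simp: L_def)
  have ratio_le: "(\<Sum>w\<in>nbhd u. real (degree w) / degree u) \<le> ?hi u + card V * c / t"
    if "u \<in> L" for u
  proof -
    have "(\<Sum>w\<in>nbhd u. real (degree w)) \<le> real (?hi u) * degree u + card V * c"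
      using sum_degree_nbhd[of u] sum_codegree_le[of u c] that
      by (simp add: L_def flip: of_nat_sum of_nat_mult of_nat_add)
    then have "(\<Sum>w\<in>nbhd u. real (degree w) / degree u) \<le> ?hi u + card V * c / degree u"
      using degree_pos[OF that] by (simp add: sum_divide_distrib[symmetric] field_simps)
    also have "card V * c / degree u \<le> card V * c / t"
      using that assms(1) by (auto simp: L_def intro!: divide_left_mono)
    finally show ?thesis by simp
  qed
  have "prod.swap ` (SIGMA u:L. nbhd u \<inter> L) = (SIGMA u:L. nbhd u \<inter> L)"
    using mem_nbhd_commute by (auto simp: L_def image_iff)
  then have "real (card (SIGMA u:L. nbhd u \<inter> L))
      \<le> (\<Sum>(u, w)\<in>(SIGMA u:L. nbhd u \<inter> L). real (degree w) / degree u)"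
    using finite_L finite_nbhd degree_pos by (intro card_le_sum_ratio_if_swap_invariant) auto
  also have "\<dots> = (\<Sum>u\<in>L. \<Sum>w\<in>nbhd u \<inter> L. real (degree w) / degree u)"
    using finite_L finite_nbhd by (simp add: sum.Sigma)
  also have "\<dots> \<le> (\<Sum>u\<in>L. \<Sum>w\<in>nbhd u. real (degree w) / degree u)"
    using finite_nbhd by (intro sum_mono sum_mono2) auto
  also have "\<dots> \<le> (\<Sum>u\<in>L. ?hi u + card V * c / t)"
    using ratio_le by (rule sum_mono)
  also have "\<dots> \<le> (\<Sum>u\<in>V. ?hi u + card V * c / t)"
    using finite_vertices assms(1) by (intro sum_mono2) (auto simp: L_def)
  also have "\<dots> = (\<Sum>u\<in>V. ?hi u) + real (card V) ^ 2 * c / t"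
    by (simp add: sum.distrib power2_eq_square)
  also have "\<dots> \<le> 2 * card (high_codegree_pairs c) + card V + real (card V) ^ 2 * c / t"
    using sum_card_high_codegree_le[of c] by (simp flip: of_nat_sum)
  finally show ?thesis .
qed

theorem card_edges_le_high_codegree_pairs:
  fixes t :: real
  assumes "t > 0"
  shows "real (card B)
    \<le> card (high_codegree_pairs c) + card V * t + card V / 2 + real (card V) ^ 2 * c / (2 * t)"
proof -
  define L where "L = {u \<in> V. t \<le> degree u}"
  have "(\<Sum>u\<in>V - L. real (degree u)) \<le> (\<Sum>u\<in>V - L. t)"
    by (intro sum_mono) (auto simp: L_def)
  also have "\<dots> \<le> card V * t"
    using assms finite_vertices by (auto intro!: mult_right_mono card_mono)
  finally have "(\<Sum>u\<in>V - L. real (degree u)) \<le> card V * t" .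
  moreover have "real (2 * card B) \<le> card (SIGMA u:L. nbhd u \<inter> L) + 2 * (\<Sum>u\<in>V - L. real (degree u))"
    using card_Sigma_nbhd_le_restrict[of L] card_Sigma_nbhd by (simp add: L_def flip: of_nat_sum)
  moreover note card_Sigma_high_degree_le[OF assms, of c, folded L_def]
  ultimately show ?thesis by (simp add: field_simps)
qed

end

lemma edge_sizes_subdiv2:
  assumes "\<exists>F\<in>snd H. card F = 2"
  shows "edge_sizes (subdiv2 H) = edge_sizes H"
proof (intro equalityI subsetI)
  fix k assume "k \<in> edge_sizes (subdiv2 H)"
  then obtain F where F: "F \<in> snd (subdiv2 H)" "k = card F" unfolding edge_sizes_def by auto
  then consider (kept) F0 where "F = Inl ` F0" "F0 \<in> snd H"
    | (subdivided) u F0 where "F = {Inl u, Inr F0}" "F0 \<in> snd H" "card F0 = 2"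
    unfolding subdiv2_def by auto
  then show "k \<in> edge_sizes H"
  proof cases
    case kept
    then show ?thesis using F(2) by (simp add: edge_sizes_def card_image)
  next
    case subdivided
    then show ?thesis using F(2) unfolding edge_sizes_def by force
  qed
next
  fix k assume "k \<in> edge_sizes H"
  then obtain F where F: "F \<in> snd H" "k = card F" unfolding edge_sizes_def by auto
  show "k \<in> edge_sizes (subdiv2 H)"
  proof (cases "card F = 2")
    case True
    then obtain u v where "F = {u, v}" by (meson card_2_iff)
    then have "{Inl u, Inr F} \<in> snd (subdiv2 H)" using F True unfolding subdiv2_def by auto
    then show ?thesis using F(2) True unfolding edge_sizes_def by (force simp: image_iff)
  next
    case False
    then have "Inl ` F \<in> snd (subdiv2 H)" using F unfolding subdiv2_def by auto
    then show ?thesis using F(2) unfolding edge_sizes_def by (force simp: card_image)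
  qed
qed

lemma subdiv2_edges_nonempty: "\<exists>F\<in>snd H. card F = 2 \<Longrightarrow> snd (subdiv2 H) \<noteq> {}"
  using edge_sizes_subdiv2[of H] by (auto simp: edge_sizes_def)

lemma hypergraph_subdiv2:
  assumes "hypergraph H"
  shows "hypergraph (subdiv2 H)"
proof -
  have "finite {F \<in> snd H. card F = 2}"
    using assms finite_subset[of "{F \<in> snd H. card F = 2}" "Pow (fst H)"] by (auto simp: hypergraph_def)
  then have "finite (fst (subdiv2 H))"
    using assms by (simp add: hypergraph_def subdiv2_def)
  moreover have "F \<subseteq> fst (subdiv2 H)" if "F \<in> snd (subdiv2 H)" for F
    using that assms unfolding subdiv2_def hypergraph_def by fastforce
  ultimately show ?thesis by (simp add: hypergraph_def)
qed

definition admissible :: "'a hgraph \<Rightarrow> nat \<Rightarrow> nat set set \<Rightarrow> bool" where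
  "admissible H n E \<longleftrightarrow> E \<subseteq> Pow {0..<n} \<and> edge_sizes ({0..<n}, E) \<subseteq> edge_sizes H
                         \<and> \<not> subhyp H ({0..<n}, E)"

lemma pi_n_eq_Max: "pi_n H n = Max (h_n n ` Collect (admissible H n))"
  unfolding pi_n_def admissible_def by (rule arg_cong[where f = Max]) blast

lemma finite_admissible: "finite (Collect (admissible H n))"
  by (rule finite_subset[of _ "Pow (Pow {0..<n})"]) (unfold admissible_def, blast, simp)

lemma h_n_le_pi_n: "admissible H n E \<Longrightarrow> h_n n E \<le> pi_n H n"
  unfolding pi_n_eq_Max by (intro Max_ge finite_imageI finite_admissible) auto

lemma pi_n_attained:
  assumes "snd H \<noteq> {}"
  obtains E where "admissible H n E" and "pi_n H n = h_n n E"
proof -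
  have "admissible H n {}" using assms by (auto simp: admissible_def edge_sizes_def subhyp_def)
  then have "pi_n H n \<in> h_n n ` Collect (admissible H n)"
    unfolding pi_n_eq_Max by (intro Max_in finite_imageI finite_admissible) auto
  then show ?thesis using that by auto
qed

lemma h_n_all_subsets_with_card_in:
  assumes "finite J" and "\<And>j. j \<in> J \<Longrightarrow> j \<le> n"
  shows "h_n n {F. F \<subseteq> {0..<n} \<and> card F \<in> J} = card J"
proof -
  let ?layer = "\<lambda>j. {F. F \<subseteq> {0..<n} \<and> card F = j}"
  have "h_n n (\<Union>j\<in>J. ?layer j) = (\<Sum>j\<in>J. \<Sum>F\<in>?layer j. 1 / real (n choose card F))"
    unfolding h_n_def using assms(1) by (intro sum.UNION_disjoint) auto
  also have "\<dots> = (\<Sum>j\<in>J. 1)"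
  proof (rule sum.cong[OF refl])
    fix j assume "j \<in> J"
    then have "real (n choose j) \<noteq> 0" using assms(2) by (simp add: not_less)
    moreover have "card (?layer j) = n choose j" using n_subsets[of "{0..<n}" j] by simp
    ultimately show "(\<Sum>F\<in>?layer j. 1 / real (n choose card F)) = 1" by simp
  qed
  finally show ?thesis by (simp add: UNION_eq)
qed

lemma pi_n_ge_card_edge_sizes:
  assumes hyp: "hypergraph H" and "snd H \<noteq> {}" and "card (fst H) \<le> n"
  shows "real (card (edge_sizes H)) - 1 \<le> pi_n H n"
proof -
  let ?R = "edge_sizes H"
  have fin_R: "finite ?R"
    using hyp finite_subset[of "snd H" "Pow (fst H)"] by (auto simp: hypergraph_def edge_sizes_def)
  have R_le: "k \<le> n" if k: "k \<in> ?R" for k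
  proof -
    obtain F where "F \<in> snd H" "k = card F" using k unfolding edge_sizes_def by blast
    then have "k \<le> card (fst H)" using hyp card_mono by (auto simp: hypergraph_def)
    then show ?thesis using assms(3) by simp
  qed
  have "?R \<noteq> {}" using assms(2) by (simp add: edge_sizes_def)
  then have max_R: "Max ?R \<in> ?R" using fin_R by simp
  define E where "E = {F. F \<subseteq> {0..<n} \<and> card F \<in> ?R - {Max ?R}}"
  \<comment> \<open>All sets with any edge size but the largest: the largest edges of H have nowhere to go.\<close>
  have "\<not> subhyp H ({0..<n}, E)"
  proof
    assume "subhyp H ({0..<n}, E)"
    then obtain g where g: "inj_on g (fst H)" "\<forall>F\<in>snd H. g ` F \<in> E" unfolding subhyp_def by auto
    obtain F where F: "F \<in> snd H" "card F = Max ?R" using max_R by (auto simp: edge_sizes_def)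
    have "card (g ` F) = card F"
      using F(1) g(1) hyp by (intro card_image) (auto simp: hypergraph_def intro: inj_on_subset)
    then show False using g(2) F unfolding E_def by auto
  qed
  then have "admissible H n E" unfolding admissible_def E_def edge_sizes_def by auto
  then have "h_n n E \<le> pi_n H n" by (rule h_n_le_pi_n)
  moreover have "h_n n E = real (card (?R - {Max ?R}))"
    unfolding E_def using fin_R R_le by (intro h_n_all_subsets_with_card_in) auto
  moreover have "card ?R \<ge> 1" using fin_R max_R by (auto simp: Suc_le_eq card_gt_0_iff)
  ultimately show ?thesis using fin_R max_R by (simp add: card_Diff_singleton of_nat_diff)
qed

lemma subhyp_subdiv2I:
  fixes H :: "'a hgraph" and f :: "'a \<Rightarrow> 'b"
  defines "T \<equiv> {F \<in> snd H. card F = 2}"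
  assumes f: "inj_on f (fst H)" "f ` fst H \<subseteq> V"
    and kept: "\<And>F. F \<in> snd H \<Longrightarrow> card F \<noteq> 2 \<Longrightarrow> f ` F \<in> E"
    and m: "inj_on m T" "\<And>F. F \<in> T \<Longrightarrow> m F \<in> V \<and> m F \<notin> f ` fst H"
    and subdivided: "\<And>F u. F \<in> T \<Longrightarrow> u \<in> F \<Longrightarrow> {f u, m F} \<in> E"
  shows "subhyp (subdiv2 H) (V, E)"
proof -
  let ?g = "case_sum f m"
  have vertices: "fst (subdiv2 H) = Inl ` fst H \<union> Inr ` T"
    by (simp add: subdiv2_def T_def)
  have "inj_on ?g (fst (subdiv2 H))"
    unfolding vertices using f(1) m(1) by (rule inj_on_case_sum) (use m(2) in blast)
  moreover have "?g ` fst (subdiv2 H) \<subseteq> V"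
    unfolding vertices using f(2) m(2) by auto
  moreover have "?g ` F \<in> E" if "F \<in> snd (subdiv2 H)" for F
    using that kept subdivided unfolding subdiv2_def T_def by (auto simp: image_image)
  ultimately show ?thesis
    unfolding subhyp_def fst_conv snd_conv by (intro exI[of _ ?g]) auto
qed

lemma subhyp_subdiv2_if_high_codegree:
  fixes H :: "'a hgraph" and E :: "'b set set"
  defines "c \<equiv> card (fst H) + card {F \<in> snd H. card F = 2}"
  assumes hyp: "hypergraph H" and "finite V" and "E \<subseteq> Pow V"
    and "subhyp H (V, {F \<in> E. card F \<noteq> 2} \<union> finite_graph.high_codegree_pairs V {F \<in> E. card F = 2} c)"
  shows "subhyp (subdiv2 H) (V, E)"
proof -
  let ?B = "{F \<in> E. card F = 2}" and ?T = "{F \<in> snd H. card F = 2}"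
  interpret G: finite_graph V ?B
    using assms(3,4) by unfold_locales auto
  obtain f where f: "inj_on f (fst H)" "f ` fst H \<subseteq> V"
    "\<And>F. F \<in> snd H \<Longrightarrow> f ` F \<in> {F \<in> E. card F \<noteq> 2} \<union> G.high_codegree_pairs c"
    using assms(5) unfolding subhyp_def by auto
  have card_f: "card (f ` F) = card F" if "F \<in> snd H" for F
    using that hyp f(1) by (intro card_image) (auto simp: hypergraph_def intro: inj_on_subset)
  have fin_T: "finite ?T"
    using hyp finite_subset[of ?T "Pow (fst H)"] by (auto simp: hypergraph_def)
  define C where "C F = {w \<in> V. \<forall>y\<in>f ` F. {y, w} \<in> ?B}" for F
  \<comment> \<open>The image of a subdivided edge has at least c common neighbours, enough to pick the
    subdivision vertices greedily and distinctly.\<close>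
  have "c \<le> card (C F)" if "F \<in> ?T" for F
  proof -
    have "f ` F \<in> G.high_codegree_pairs c"
      using f(3) card_f that by auto
    then obtain u v where uv: "f ` F = {u, v}" "c \<le> card (G.nbhd u \<inter> G.nbhd v)"
      unfolding G.high_codegree_pairs_def G.codegree_def by blast
    have "C F = G.nbhd u \<inter> G.nbhd v"
      unfolding C_def G.nbhd_def uv(1) by auto
    then show ?thesis using uv(2) by simp
  qed
  then have "\<exists>m. inj_on m ?T \<and> (\<forall>F\<in>?T. m F \<in> C F \<and> m F \<notin> f ` fst H)"
  proof (intro greedy_distinct_representatives[OF fin_T])
    have "card (f ` fst H) \<le> card (fst H)"
      using hyp by (intro card_image_le) (simp add: hypergraph_def)
    moreover assume "\<And>F. F \<in> ?T \<Longrightarrow> c \<le> card (C F)"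
    ultimately show "card ?T + card (f ` fst H) \<le> card (C F)" if "F \<in> ?T" for F
      using that unfolding c_def by fastforce
  qed (use hyp \<open>finite V\<close> in \<open>simp_all add: hypergraph_def C_def\<close>)
  then obtain m where m: "inj_on m ?T" "\<And>F. F \<in> ?T \<Longrightarrow> m F \<in> C F \<and> m F \<notin> f ` fst H"
    by blast
  have kept: "f ` F \<in> E" if "F \<in> snd H" "card F \<noteq> 2" for F
  proof -
    have "card (f ` F) \<noteq> 2" using that card_f by simp
    then have "f ` F \<notin> G.high_codegree_pairs c"
      by (auto simp: G.high_codegree_pairs_def)
    then show ?thesis using f(3)[OF that(1)] by simp
  qed
  have subdivision_vertex: "m F \<in> V \<and> m F \<notin> f ` fst H" if "F \<in> ?T" for F
    using m(2)[OF that] by (simp add: C_def)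
  have subdivided: "{f u, m F} \<in> E" if "F \<in> ?T" "u \<in> F" for F u
    using m(2)[OF that(1)] that(2) by (simp add: C_def)
  show ?thesis
    by (rule subhyp_subdiv2I[OF f(1,2) kept m(1) subdivision_vertex subdivided])
qed

lemma admissible_high_codegree_reduction:
  fixes H :: "'a hgraph"
  defines "c \<equiv> card (fst H) + card {F \<in> snd H. card F = 2}"
  assumes hyp: "hypergraph H" and two: "\<exists>F\<in>snd H. card F = 2"
    and adm: "admissible (subdiv2 H) n E"
  shows "admissible H n
    ({F \<in> E. card F \<noteq> 2} \<union> finite_graph.high_codegree_pairs {0..<n} {F \<in> E. card F = 2} c)"
proof -
  interpret G: finite_graph "{0..<n}" "{F \<in> E. card F = 2}"
    using adm by unfold_locales (auto simp: admissible_def)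
  let ?E' = "{F \<in> E. card F \<noteq> 2} \<union> G.high_codegree_pairs c"
  have "card ` E \<subseteq> edge_sizes H"
    using adm edge_sizes_subdiv2[OF two] by (simp add: admissible_def edge_sizes_def)
  moreover have "2 \<in> edge_sizes H"
  proof -
    obtain F2 where F2: "F2 \<in> snd H" "card F2 = 2" using two by blast
    show ?thesis unfolding edge_sizes_def using image_eqI[of 2 card F2 "snd H"] F2 by simp
  qed
  ultimately have "card ` E \<union> {2} \<subseteq> edge_sizes H" by simp
  moreover have "card ` ?E' \<subseteq> card ` E \<union> {2}"
    by (auto simp: G.high_codegree_pairs_def)
  ultimately have "card ` ?E' \<subseteq> edge_sizes H" by (rule subset_trans[rotated])
  then have "edge_sizes ({0..<n}, ?E') \<subseteq> edge_sizes H"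
    by (simp only: edge_sizes_def snd_conv)
  moreover have "?E' \<subseteq> Pow {0..<n}"
    using adm by (auto simp: admissible_def G.high_codegree_pairs_def)
  moreover have "\<not> subhyp H ({0..<n}, ?E')"
  proof
    assume "subhyp H ({0..<n}, ?E')"
    then have "subhyp (subdiv2 H) ({0..<n}, E)"
      using adm unfolding c_def admissible_def by (intro subhyp_subdiv2_if_high_codegree[OF hyp]) auto
    then show False using adm by (simp add: admissible_def)
  qed
  ultimately show ?thesis by (simp add: admissible_def)
qed

lemma h_n_split_two:
  assumes "finite E"
  shows "h_n n E = h_n n {F \<in> E. card F \<noteq> 2} + card {F \<in> E. card F = 2} / real (n choose 2)"
proof -
  have "h_n n E = h_n n {F \<in> E. card F \<noteq> 2} + h_n n {F \<in> E. card F = 2}"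
    unfolding h_n_def using assms by (subst sum.union_disjoint[symmetric]) (auto intro: sum.cong)
  then show ?thesis by (simp add: h_n_def)
qed

lemma pi_n_subdiv2_le:
  fixes H :: "'a hgraph" and t :: real
  defines "c \<equiv> card (fst H) + card {F \<in> snd H. card F = 2}"
  assumes hyp: "hypergraph H" and two: "\<exists>F\<in>snd H. card F = 2" and "t > 0"
  shows "pi_n (subdiv2 H) n
    \<le> pi_n H n + (n * t + n / 2 + n ^ 2 * c / (2 * t)) / real (n choose 2)"
proof -
  obtain E where adm: "admissible (subdiv2 H) n E" and pi_eq: "pi_n (subdiv2 H) n = h_n n E"
    using subdiv2_edges_nonempty[OF two] by (rule pi_n_attained)
  interpret G: finite_graph "{0..<n}" "{F \<in> E. card F = 2}"
    using adm by unfold_locales (auto simp: admissible_def)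
  let ?A = "{F \<in> E. card F \<noteq> 2}" and ?Bh = "G.high_codegree_pairs c"
  have fin_E: "finite E"
    using adm finite_subset[of E "Pow {0..<n}"] by (simp add: admissible_def)
  have fin_Bh: "finite ?Bh"
    by (rule finite_subset[of _ "Pow {0..<n}"]) (auto simp: G.high_codegree_pairs_def)
  have card_Bh: "card F = 2" if "F \<in> ?Bh" for F
    using that by (auto simp: G.high_codegree_pairs_def)
  let ?D = "real (n choose 2)" and ?err = "real n * t + real n / 2 + real n ^ 2 * real c / (2 * t)"
  have "card {F \<in> E. card F = 2} / ?D \<le> (card ?Bh + ?err) / ?D"
    using G.card_edges_le_high_codegree_pairs[OF \<open>t > 0\<close>, of c] by (intro divide_right_mono) auto
  then have "h_n n E \<le> h_n n ?A + card ?Bh / ?D + ?err / ?D"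
    using h_n_split_two[OF fin_E, of n] by (simp add: add_divide_distrib)
  moreover have "h_n n (?A \<union> ?Bh) = h_n n ?A + card ?Bh / ?D"
  proof -
    have "{F \<in> ?A \<union> ?Bh. card F \<noteq> 2} = ?A" and "{F \<in> ?A \<union> ?Bh. card F = 2} = ?Bh"
      using card_Bh by auto
    then show ?thesis using h_n_split_two[of "?A \<union> ?Bh" n] fin_E fin_Bh by simp
  qed
  moreover have "h_n n (?A \<union> ?Bh) \<le> pi_n H n"
    using admissible_high_codegree_reduction[OF hyp two adm] unfolding c_def by (rule h_n_le_pi_n)
  ultimately show ?thesis using pi_eq by linarith
qed

lemma real_choose_two: "real (n choose 2) = real n * (real n - 1) / 2"
  by (cases n) (simp_all add: binomial_gbinomial gbinomial_prod_rev numeral_2_eq_2 field_simps)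

lemma subdivision_error_tendsto_zero:
  fixes c :: real
  shows "(\<lambda>n. (real n * sqrt n + real n / 2 + real n ^ 2 * c / (2 * sqrt n)) / real (n choose 2)) \<longlonglongrightarrow> 0"
proof -
  have "(\<lambda>n. (real n * sqrt n + real n / 2) / real (n choose 2)) \<longlonglongrightarrow> 0"
    unfolding real_choose_two by real_asymp
  moreover have "(\<lambda>n. real n ^ 2 / (2 * sqrt n) / real (n choose 2)) \<longlonglongrightarrow> 0"
    unfolding real_choose_two by real_asymp
  ultimately have "(\<lambda>n. (real n * sqrt n + real n / 2) / real (n choose 2)
      + c * (real n ^ 2 / (2 * sqrt n) / real (n choose 2))) \<longlonglongrightarrow> 0 + c * 0"
    by (intro tendsto_intros)
  then show ?thesis by (simp add: add_divide_distrib mult.commute)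
qed

theorem mainTheorem13:
  fixes H :: "'a hgraph"
  assumes "hypergraph H"
    and "\<exists>F\<in>snd H. card F = 2"
    and "degenerate H"
  shows "degenerate (subdiv2 H)"
proof -
  define c where "c = card (fst H) + card {F \<in> snd H. card F = 2}"
  define err where "err n = (real n * sqrt n + real n / 2 + real n ^ 2 * real c / (2 * sqrt n))
    / real (n choose 2)" for n :: nat
  let ?L = "real (card (edge_sizes H)) - 1"
  have "(\<lambda>n. pi_n H n + err n) \<longlonglongrightarrow> ?L + 0"
    using assms(3) subdivision_error_tendsto_zero unfolding degenerate_def err_def
    by (rule tendsto_add)
  then have upper_limit: "(\<lambda>n. pi_n H n + err n) \<longlonglongrightarrow> ?L" by simp
  have "?L \<le> pi_n (subdiv2 H) n" if "card (fst (subdiv2 H)) \<le> n" for n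
    using pi_n_ge_card_edge_sizes[OF hypergraph_subdiv2[OF assms(1)]
        subdiv2_edges_nonempty[OF assms(2)] that]
    unfolding edge_sizes_subdiv2[OF assms(2)] .
  then have lower: "\<forall>\<^sub>F n in sequentially. ?L \<le> pi_n (subdiv2 H) n"
    by (rule eventually_sequentiallyI)
  have "pi_n (subdiv2 H) n \<le> pi_n H n + err n" if "1 \<le> n" for n
    using pi_n_subdiv2_le[OF assms(1,2), of "sqrt n" n] that unfolding err_def c_def by simp
  then have upper: "\<forall>\<^sub>F n in sequentially. pi_n (subdiv2 H) n \<le> pi_n H n + err n"
    by (rule eventually_sequentiallyI)
  have "(\<lambda>n. pi_n (subdiv2 H) n) \<longlonglongrightarrow> ?L"
    by (rule tendsto_sandwich[OF lower upper tendsto_const upper_limit])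
  then show ?thesis unfolding degenerate_def edge_sizes_subdiv2[OF assms(2)] .
qed

end
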